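(* Let $\psi_n$ be the division polynomials of the Legendre curve defined below. For every $\varepsilon>0$ there exists a constant $c(\varepsilon)$ such that for all $n\ge 1$, $h(\psi_n)\le c(\varepsilon)\, n^{2+\varepsilon}$; that is, $h(\psi_n)\le n^{2+o(1)}$.
   Context: Let $\lambda, X, Y$ be independent variables (associated with the Legendre curve $E_\lambda: Y^2=X(X-1)(X-\lambda)$). Define $\psi_n \in \mathbb{Z}[\lambda,X,Y]$ by $\psi_0=0$, $\psi_1=1$, $\psi_2=2Y$, $\psi_3 = 3X^4-4(1+\lambda)X^3+6\lambda X^2-\lambda^2$, $\psi_4 = 2Y\big(2X^6-4(1+\lambda)X^5+10\lambda X^4-10\lambda^2X^2+4\lambda^2(1+\lambda)X-2\lambda^3\big)$, and recursively $$\psi_{2k+1}=\psi_{k+2}\psi_k^3-\psi_{k-1}\psi_{k+1}^3,\qquad \psi_{2k}=\frac{1}{2Y}\psi_k\big(\psi_{k+2}\psi_{k-1}^2-\psi_{k-2}\psi_{k+1}^2\big).$$ For a polynomial $G$ with integer coefficients, its height $h(G)$ is the logarithm of the maximum of the absolute values of its coefficients. *)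

theory Defs
  imports Complex_Main "HOL-Computational_Algebra.Polynomial"
begin

text \<open>Elements of Z[lambda,X,Y] are represented as nested univariate polynomials:
  polynomials in Y whose coefficients are polynomials in X whose coefficients
  are polynomials in lambda with integer coefficients.\<close>

type_synonym zpoly3 = "int poly poly poly"

definition varY :: zpoly3 where "varY = [:0, 1:]"
definition varX :: zpoly3 where "varX = [:[:0, 1:]:]"
definition varL :: zpoly3 where "varL = [:[:[:0, 1:]:]:]"

definition psi3 :: zpoly3 where
  "psi3 = 3 * varX ^ 4 - 4 * (1 + varL) * varX ^ 3 + 6 * varL * varX ^ 2 - varL ^ 2"

definition psi4 :: zpoly3 where
  "psi4 = 2 * varY * (2 * varX ^ 6 - 4 * (1 + varL) * varX ^ 5 + 10 * varL * varX ^ 4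
          - 10 * varL ^ 2 * varX ^ 2 + 4 * varL ^ 2 * (1 + varL) * varX - 2 * varL ^ 3)"

function divpsi :: "nat \<Rightarrow> zpoly3" where
  "divpsi n =
    (if n = 0 then 0
     else if n = 1 then 1
     else if n = 2 then 2 * varY
     else if n = 3 then psi3
     else if n = 4 then psi4
     else if odd n then
       divpsi (n div 2 + 2) * divpsi (n div 2) ^ 3
         - divpsi (n div 2 - 1) * divpsi (n div 2 + 1) ^ 3
     else
       (divpsi (n div 2) * (divpsi (n div 2 + 2) * divpsi (n div 2 - 1) ^ 2
          - divpsi (n div 2 - 2) * divpsi (n div 2 + 1) ^ 2)) div (2 * varY))"
  by auto
termination
  by (relation "measure id") auto

definition height3 :: "zpoly3 \<Rightarrow> real" where
  "height3 p = ln (real_of_int (Max {\<bar>coeff (coeff (coeff p i) j) k\<bar> | i j k. True}))"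

end

theory Submission
  imports Defs
begin

text \<open>
  Let \<open>\<parallel>p\<parallel>\<close> be the sum of the absolute values of all integer coefficients of \<open>p\<close>. It is
  subadditive and submultiplicative, and dividing by \<open>2Y\<close> cannot increase it. The recursion
  computes \<open>\<psi>\<^sub>n\<close> from \<open>\<psi>\<^sub>j\<close> with \<open>j \<le> n/2 + 2\<close> using two products of four factors, so
  \<open>\<parallel>\<psi>\<^sub>n\<parallel> \<le> 2 E\<^sup>4\<close> when \<open>E\<close> bounds these \<open>\<parallel>\<psi>\<^sub>j\<parallel>\<close>. Since halving the index and
  raising to the fourth power balance out as \<open>(n/2)\<^sup>2 \<cdot> 4 = n\<^sup>2\<close>, induction gives
  \<open>\<parallel>\<psi>\<^sub>n\<parallel> \<le> C\<^bsup>O(n\<^sup>2)\<^esup>\<close>, i.e. \<open>h(\<psi>\<^sub>n) = O(n\<^sup>2)\<close>.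
\<close>

locale submult_norm =
  fixes N :: "'a::idom_divide \<Rightarrow> int"
  assumes norm_zero [simp]: "N 0 = 0"
    and norm_nonneg: "0 \<le> N a"
    and norm_add: "N (a + b) \<le> N a + N b"
    and norm_mult: "N (a * b) \<le> N a * N b"
    and norm_uminus [simp]: "N (- a) = N a"
    and norm_div_two: "N (a div 2) \<le> N a"
begin

lemma norm_diff: "N (a - b) \<le> N a + N b"
  using norm_add[of a "- b"] by simp

lemma norm_mult4:
  assumes "N a \<le> E" "N b \<le> E" "N c \<le> E" "N d \<le> E"
  shows "N (a * (b * c * d)) \<le> E ^ 4"
proof -
  have E_nonneg: "0 \<le> E"
    using assms(1) norm_nonneg order_trans by blast
  have "N (a * (b * c * d)) \<le> N a * (N b * N c * N d)"
    by (meson norm_mult norm_nonneg mult_left_mono mult_right_mono order_trans)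
  also have "\<dots> \<le> E * (E * E * E)"
    using assms E_nonneg by (intro mult_mono) (auto simp: norm_nonneg)
  finally show ?thesis
    by (simp add: power4_eq_xxxx)
qed

end

definition coeff_norm :: "('a::zero \<Rightarrow> int) \<Rightarrow> 'a poly \<Rightarrow> int" where
  "coeff_norm N p = (\<Sum>i<Suc (degree p). N (coeff p i))"

context submult_norm
begin

lemma coeff_norm_eq_sum:
  assumes "degree p < m"
  shows "coeff_norm N p = (\<Sum>i<m. N (coeff p i))"
  unfolding coeff_norm_def
  by (rule sum.mono_neutral_left) (use assms in \<open>auto simp: coeff_eq_0\<close>)

lemma coeff_norm_nonneg: "0 \<le> coeff_norm N p"
  unfolding coeff_norm_def by (simp add: sum_nonneg norm_nonneg)

lemma coeff_norm_zero [simp]: "coeff_norm N 0 = 0"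
  by (simp add: coeff_norm_def)

lemma norm_coeff_le_coeff_norm: "N (coeff p i) \<le> coeff_norm N p"
proof (cases "i \<le> degree p")
  case True
  then show ?thesis
    unfolding coeff_norm_def by (intro member_le_sum) (auto simp: norm_nonneg)
next
  case False
  then show ?thesis
    using coeff_norm_nonneg by (simp add: coeff_eq_0)
qed

lemma coeff_norm_add: "coeff_norm N (p + q) \<le> coeff_norm N p + coeff_norm N q"
proof -
  define m where "m = Suc (max (degree p) (degree q))"
  have "degree (p + q) < m" "degree p < m" "degree q < m"
    using degree_add_le[of p "max (degree p) (degree q)" q] unfolding m_def by auto
  then have "coeff_norm N (p + q) = (\<Sum>i<m. N (coeff p i + coeff q i))"
    by (simp add: coeff_norm_eq_sum)
  also have "\<dots> \<le> (\<Sum>i<m. N (coeff p i) + N (coeff q i))"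
    by (intro sum_mono norm_add)
  also have "\<dots> = coeff_norm N p + coeff_norm N q"
    by (simp only: sum.distrib coeff_norm_eq_sum[OF \<open>degree p < m\<close>]
        coeff_norm_eq_sum[OF \<open>degree q < m\<close>])
  finally show ?thesis .
qed

lemma coeff_norm_uminus: "coeff_norm N (- p) = coeff_norm N p"
  by (simp add: coeff_norm_def)

lemma coeff_norm_smult: "coeff_norm N (smult a p) \<le> N a * coeff_norm N p"
proof -
  have "degree (smult a p) < Suc (degree p)"
    using degree_smult_le[of a p] by simp
  then have "coeff_norm N (smult a p) = (\<Sum>i<Suc (degree p). N (a * coeff p i))"
    by (simp add: coeff_norm_eq_sum)
  also have "\<dots> \<le> (\<Sum>i<Suc (degree p). N a * N (coeff p i))"
    by (intro sum_mono norm_mult)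
  also have "\<dots> = N a * coeff_norm N p"
    unfolding coeff_norm_def by (rule sum_distrib_left[symmetric])
  finally show ?thesis .
qed

lemma coeff_norm_pCons: "coeff_norm N (pCons a p) = N a + coeff_norm N p"
proof -
  have "degree (pCons a p) < Suc (Suc (degree p))"
    using degree_pCons_le[of a p] by simp
  then show ?thesis
    unfolding coeff_norm_eq_sum[OF \<open>degree (pCons a p) < _\<close>] sum.lessThan_Suc_shift
    by (simp only: coeff_pCons_0 coeff_pCons_Suc coeff_norm_def sum.lessThan_Suc_shift)
qed

lemma coeff_norm_mult: "coeff_norm N (p * q) \<le> coeff_norm N p * coeff_norm N q"
proof (induction p rule: pCons_induct)
  case 0
  then show ?case by simp
next
  case (pCons a p)
  have "coeff_norm N (pCons a p * q) \<le> coeff_norm N (smult a q) + coeff_norm N (pCons 0 (p * q))"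
    using coeff_norm_add by simp
  also have "\<dots> \<le> N a * coeff_norm N q + coeff_norm N p * coeff_norm N q"
    using coeff_norm_smult[of a q] pCons.IH by (simp add: coeff_norm_pCons)
  also have "\<dots> = coeff_norm N (pCons a p) * coeff_norm N q"
    by (simp add: coeff_norm_pCons algebra_simps)
  finally show ?case .
qed

lemma coeff_norm_monom: "coeff_norm N (monom a n) = N a"
proof -
  have "degree (monom a n) < Suc n"
    using degree_monom_le[of a n] by simp
  then have "coeff_norm N (monom a n) = (\<Sum>i<Suc n. if i = n then N a else 0)"
    by (simp add: coeff_norm_eq_sum)
  then show ?thesis by simp
qed

lemma coeff_norm_diff_monom_coeff:
  "coeff_norm N (r - monom (coeff r d) d) = coeff_norm N r - N (coeff r d)"
proof -
  define r' where "r' = r - monom (coeff r d) d"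
  define m where "m = Suc (max (degree r) d)"
  have deg_r: "degree r < m"
    unfolding m_def by simp
  have deg_r': "degree r' < m"
    using degree_diff_le[of r "max (degree r) d" "monom (coeff r d) d"]
      degree_monom_le[of "coeff r d" d]
    unfolding m_def r'_def by (simp add: le_imp_less_Suc)
  have pointwise: "N (coeff r i) = N (coeff r' i) + (if i = d then N (coeff r d) else 0)" for i
    by (auto simp: coeff_monom r'_def)
  have "coeff_norm N r = (\<Sum>i<m. N (coeff r' i)) + (\<Sum>i<m. if i = d then N (coeff r d) else 0)"
    unfolding coeff_norm_eq_sum[OF deg_r] by (subst pointwise) (simp only: sum.distrib)
  also have "\<dots> = coeff_norm N r' + N (coeff r d)"
    unfolding coeff_norm_eq_sum[OF deg_r'] by (simp add: m_def)
  finally show ?thesis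
    unfolding r'_def by simp
qed

text \<open>
  Each step of long division by the monomial \<open>lc X\<^sup>k\<close> moves the leading coefficient \<open>c\<close> of
  the remainder into the quotient as \<open>c div lc\<close>, or stops (returning the junk value \<open>0\<close>)
  when the division is not exact; so the total norm of quotient and remainder never grows.
\<close>
lemma coeff_norm_divide_poly_main:
  assumes norm_div_lc: "\<And>c. N (c div lc) \<le> N c"
    and "n > 0 \<longrightarrow> d = n - 1 + k"
  shows "coeff_norm N (divide_poly_main lc q r (monom lc k) d n) \<le> coeff_norm N q + coeff_norm N r"
  using assms(2)
proof (induction n arbitrary: q r d)
  case 0
  then show ?case by (simp add: coeff_norm_nonneg)
next
  case (Suc n)
  have d: "d = n + k"
    using Suc.prems by simp
  define a where "a = coeff r d div lc"
  show ?case
  proof (cases "a * lc = coeff r d")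
    case True
    then have "divide_poly_main lc q r (monom lc k) d (Suc n) =
        divide_poly_main lc (q + monom a n) (r - monom (coeff r d) d) (monom lc k) (d - 1) n"
      by (simp add: Let_def a_def mult_monom d)
    also have "coeff_norm N \<dots> \<le> coeff_norm N (q + monom a n) + coeff_norm N (r - monom (coeff r d) d)"
      by (rule Suc.IH) (use d in auto)
    also have "\<dots> \<le> coeff_norm N q + N a + (coeff_norm N r - N (coeff r d))"
      using coeff_norm_add[of q "monom a n"]
      by (simp add: coeff_norm_monom coeff_norm_diff_monom_coeff)
    also have "\<dots> \<le> coeff_norm N q + coeff_norm N r"
      using norm_div_lc unfolding a_def by auto
    finally show ?thesis .
  next
    case False
    then show ?thesis
      by (simp add: Let_def a_def coeff_norm_nonneg add_nonneg_nonneg)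
  qed
qed

lemma coeff_norm_div_monom:
  assumes "\<And>c. N (c div lc) \<le> N c"
  shows "coeff_norm N (f div monom lc k) \<le> coeff_norm N f"
proof (cases "lc = 0")
  case True
  then show ?thesis by (simp add: coeff_norm_nonneg)
next
  case False
  then have nz: "monom lc k \<noteq> 0"
    by simp
  define n where "n = 1 + length (coeffs f) - length (coeffs (monom lc k))"
  have "f div monom lc k = divide_poly_main lc 0 f (monom lc k) (degree f) n"
    using nz False unfolding divide_poly_def n_def by (simp add: degree_monom_eq)
  moreover have "n > 0 \<longrightarrow> degree f = n - 1 + k"
    using length_coeffs_degree[OF nz] length_coeffs_degree[of f] False
    by (cases "f = 0") (auto simp: n_def degree_monom_eq)
  ultimately show ?thesis
    using coeff_norm_divide_poly_main[OF assms] by (metis add_0 coeff_norm_zero)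
qed

lemma submult_norm_coeff_norm: "submult_norm (coeff_norm N)"
proof
  show "coeff_norm N (p div 2) \<le> coeff_norm N p" for p
    using coeff_norm_div_monom[of 2 p 0] norm_div_two by (simp add: monom_0 numeral_poly)
qed (use coeff_norm_nonneg coeff_norm_add coeff_norm_mult coeff_norm_uminus in auto)

end

interpretation int_abs: submult_norm "abs :: int \<Rightarrow> int"
  by unfold_locales (auto simp: abs_mult)

interpretation poly1: submult_norm "coeff_norm (abs :: int \<Rightarrow> int)"
  by (rule int_abs.submult_norm_coeff_norm)

interpretation poly2: submult_norm "coeff_norm (coeff_norm (abs :: int \<Rightarrow> int))"
  by (rule poly1.submult_norm_coeff_norm)

definition l1_norm3 :: "zpoly3 \<Rightarrow> int" where
  "l1_norm3 = coeff_norm (coeff_norm (coeff_norm abs))"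

interpretation poly3: submult_norm l1_norm3
  unfolding l1_norm3_def by (rule poly2.submult_norm_coeff_norm)

lemma abs_coeff_le_l1_norm3: "\<bar>coeff (coeff (coeff p i) j) k\<bar> \<le> l1_norm3 p"
  unfolding l1_norm3_def
  using int_abs.norm_coeff_le_coeff_norm poly1.norm_coeff_le_coeff_norm
    poly2.norm_coeff_le_coeff_norm
  by (meson order_trans)

lemma height3_le_l1_norm3: "height3 p \<le> ln (max 1 (l1_norm3 p))"
proof -
  define S where "S = {\<bar>coeff (coeff (coeff p i) j) k\<bar> | i j k. True}"
  have S_sub: "S \<subseteq> {0..l1_norm3 p}"
    unfolding S_def using abs_coeff_le_l1_norm3 by auto
  have "Max S \<in> S"
    using S_sub finite_subset by (intro Max_in) (auto simp: S_def)
  then have "0 \<le> Max S" "Max S \<le> l1_norm3 p"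
    using S_sub by auto
  moreover have "height3 p = ln (Max S)"
    unfolding height3_def S_def by simp
  ultimately show ?thesis
    by (cases "Max S = 0") auto
qed

lemma l1_norm3_div_2Y: "l1_norm3 (p div (2 * varY)) \<le> l1_norm3 p"
proof -
  have "2 * varY = monom 2 1"
    by (simp add: varY_def monom_Suc monom_0 numeral_poly)
  then show ?thesis
    unfolding l1_norm3_def using poly2.norm_div_two by (simp add: poly2.coeff_norm_div_monom)
qed

lemma divpsi_odd:
  "n \<ge> 5 \<Longrightarrow> odd n \<Longrightarrow> divpsi n = divpsi (n div 2 + 2) * divpsi (n div 2) ^ 3
     - divpsi (n div 2 - 1) * divpsi (n div 2 + 1) ^ 3"
  by (subst divpsi.simps) simp

lemma divpsi_even:
  "n \<ge> 5 \<Longrightarrow> even n \<Longrightarrow> divpsi n = (divpsi (n div 2) * (divpsi (n div 2 + 2) * divpsi (n div 2 - 1) ^ 2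
     - divpsi (n div 2 - 2) * divpsi (n div 2 + 1) ^ 2)) div (2 * varY)"
  by (subst divpsi.simps) simp

declare divpsi.simps [simp del]

lemma l1_norm3_divpsi_le:
  assumes "n \<ge> 5" and bound: "\<And>j. j \<le> n div 2 + 2 \<Longrightarrow> l1_norm3 (divpsi j) \<le> E"
  shows "l1_norm3 (divpsi n) \<le> 2 * E ^ 4"
proof -
  define k where "k = n div 2"
  have bound_k: "\<And>j. j \<le> k + 2 \<Longrightarrow> l1_norm3 (divpsi j) \<le> E"
    using bound unfolding k_def .
  show ?thesis
  proof (cases "odd n")
    case True
    then have "l1_norm3 (divpsi n) \<le> l1_norm3 (divpsi (k + 2) * (divpsi k * divpsi k * divpsi k))
        + l1_norm3 (divpsi (k - 1) * (divpsi (k + 1) * divpsi (k + 1) * divpsi (k + 1)))"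
      using assms(1) by (simp add: divpsi_odd k_def power3_eq_cube poly3.norm_diff)
    also have "\<dots> \<le> E ^ 4 + E ^ 4"
      by (intro add_mono poly3.norm_mult4 bound_k) auto
    finally show ?thesis by simp
  next
    case False
    then have "l1_norm3 (divpsi n) \<le> l1_norm3 (divpsi k * (divpsi (k + 2) * divpsi (k - 1) ^ 2
        - divpsi (k - 2) * divpsi (k + 1) ^ 2))"
      using assms(1) l1_norm3_div_2Y by (simp add: divpsi_even k_def)
    also have "\<dots> \<le> l1_norm3 (divpsi k * (divpsi (k + 2) * divpsi (k - 1) * divpsi (k - 1)))
        + l1_norm3 (divpsi k * (divpsi (k - 2) * divpsi (k + 1) * divpsi (k + 1)))"
      unfolding right_diff_distrib power2_eq_square by (simp only: mult.assoc poly3.norm_diff)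
    also have "\<dots> \<le> E ^ 4 + E ^ 4"
      by (intro add_mono poly3.norm_mult4 bound_k) auto
    finally show ?thesis by simp
  qed
qed

definition divpsi_size :: "nat \<Rightarrow> int" where
  "divpsi_size n = 2 * max 1 (l1_norm3 (divpsi n))"

lemma divpsi_size_ge_2: "2 \<le> divpsi_size n"
  by (simp add: divpsi_size_def)

lemma divpsi_size_le_pow4:
  assumes "n \<ge> 5" and bound: "\<And>j. j \<le> n div 2 + 2 \<Longrightarrow> divpsi_size j \<le> X"
  shows "divpsi_size n \<le> X ^ 4"
proof -
  define E where "E = X div 2"
  have "l1_norm3 (divpsi j) \<le> E" if "j \<le> n div 2 + 2" for j
    using bound[OF that] unfolding divpsi_size_def E_def by presburger
  then have "l1_norm3 (divpsi n) \<le> 2 * E ^ 4"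
    using l1_norm3_divpsi_le assms(1) by blast
  moreover have "2 \<le> X"
    using bound[of 0] divpsi_size_ge_2 order_trans by blast
  then have "0 \<le> 2 * E" "2 * E \<le> X"
    unfolding E_def by presburger+
  then have "16 * E ^ 4 \<le> X ^ 4" "0 \<le> E ^ 4"
    using power_mono[of "2 * E" X 4] by (simp_all add: power_mult_distrib)
  moreover have "2 \<le> X ^ 4"
    using \<open>2 \<le> X\<close> self_le_power[of X 4] by simp
  ultimately show ?thesis
    unfolding divpsi_size_def by linarith
qed

text \<open>
  For \<open>n \<ge> 12\<close> the shifted index \<open>K n = n - 4\<close> satisfies \<open>2 K (n div 2 + 2) \<le> K n\<close>,
  which is what makes the fourth power of the recursion fit into \<open>C\<^bsup>K n\<^sup>2\<^esup>\<close>.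
\<close>
definition divpsi_index :: "nat \<Rightarrow> nat" where
  "divpsi_index n = max (n - 4) 4"

definition divpsi_base :: int where
  "divpsi_base = Max (divpsi_size ` {..11})"

lemma divpsi_size_le_base: "n \<le> 11 \<Longrightarrow> divpsi_size n \<le> divpsi_base"
  unfolding divpsi_base_def by (intro Max_ge) auto

lemma divpsi_base_ge_2: "2 \<le> divpsi_base"
  using divpsi_size_ge_2[of 0] divpsi_size_le_base[of 0] by linarith

lemma divpsi_size_le_exp: "divpsi_size n \<le> divpsi_base ^ (divpsi_index n ^ 2)"
proof (induction n rule: less_induct)
  case (less n)
  have pow_mono: "divpsi_base ^ a \<le> divpsi_base ^ b" if "a \<le> b" for a b
    using divpsi_base_ge_2 that by (intro power_increasing) auto
  show ?case
  proof (cases "n \<le> 11")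
    case True
    then have "divpsi_size n \<le> divpsi_base ^ 1"
      using divpsi_size_le_base by simp
    also have "\<dots> \<le> divpsi_base ^ (divpsi_index n ^ 2)"
      by (rule pow_mono) (simp add: divpsi_index_def)
    finally show ?thesis .
  next
    case False
    define m where "m = n div 2 + 2"
    define X where "X = divpsi_base ^ (divpsi_index m ^ 2)"
    have "divpsi_size j \<le> X" if "j \<le> m" for j
    proof -
      have "divpsi_index j ^ 2 \<le> divpsi_index m ^ 2"
        using that by (simp add: divpsi_index_def power_mono)
      moreover have "j < n"
        using that False unfolding m_def by simp
      ultimately show ?thesis
        using less.IH[of j] pow_mono unfolding X_def by (meson order_trans)
    qed
    then have "divpsi_size n \<le> X ^ 4"
      using False by (intro divpsi_size_le_pow4) (auto simp: m_def)
    also have "\<dots> = divpsi_base ^ ((2 * divpsi_index m) ^ 2)"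
      by (simp add: X_def power_mult[symmetric] power_mult_distrib mult.commute)
    also have "\<dots> \<le> divpsi_base ^ (divpsi_index n ^ 2)"
      using False by (intro pow_mono power_mono) (auto simp: divpsi_index_def m_def)
    finally show ?thesis .
  qed
qed

lemma height3_divpsi_le_square:
  assumes "n \<ge> 1"
  shows "height3 (divpsi n) \<le> 16 * ln divpsi_base * real n ^ 2"
proof -
  have ln_base_nonneg: "0 \<le> ln divpsi_base"
    using divpsi_base_ge_2 by simp
  have index_sq: "real (divpsi_index n) ^ 2 \<le> (4 * real n) ^ 2"
    using assms by (intro power_mono) (auto simp: divpsi_index_def)
  have "height3 (divpsi n) \<le> ln (max 1 (l1_norm3 (divpsi n)))"
    by (rule height3_le_l1_norm3)
  also have "\<dots> \<le> ln (divpsi_size n)"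
    by (simp add: divpsi_size_def)
  also have "\<dots> \<le> ln (divpsi_base ^ (divpsi_index n ^ 2))"
    using divpsi_size_le_exp[of n] divpsi_size_ge_2[of n]
    by (subst ln_le_cancel_iff) (auto simp del: of_int_power)
  also have "\<dots> = real (divpsi_index n) ^ 2 * ln divpsi_base"
    using divpsi_base_ge_2 by (simp add: ln_realpow)
  also have "\<dots> \<le> (4 * real n) ^ 2 * ln divpsi_base"
    using index_sq ln_base_nonneg by (rule mult_right_mono)
  finally show ?thesis
    by (simp add: power_mult_distrib mult_ac)
qed

theorem lemmaA3:
  shows "\<forall>\<epsilon>::real. \<epsilon> > 0 \<longrightarrow>
           (\<exists>c::real. \<forall>n::nat. n \<ge> 1 \<longrightarrow>
              height3 (divpsi n) \<le> c * real n powr (2 + \<epsilon>))"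
proof (intro allI impI exI[of _ "16 * ln divpsi_base"])
  fix \<epsilon> :: real and n :: nat
  assume "\<epsilon> > 0" "n \<ge> 1"
  have "0 \<le> 16 * ln divpsi_base"
    using divpsi_base_ge_2 by simp
  have "real n ^ 2 = real n powr 2"
    using \<open>n \<ge> 1\<close> by (simp add: powr_realpow)
  also have "\<dots> \<le> real n powr (2 + \<epsilon>)"
    using \<open>n \<ge> 1\<close> \<open>\<epsilon> > 0\<close> by (intro powr_mono) auto
  finally have "16 * ln divpsi_base * real n ^ 2 \<le> 16 * ln divpsi_base * real n powr (2 + \<epsilon>)"
    using \<open>0 \<le> 16 * ln divpsi_base\<close> by (rule mult_left_mono)
  then show "height3 (divpsi n) \<le> 16 * ln divpsi_base * real n powr (2 + \<epsilon>)"
    using height3_divpsi_le_square[OF \<open>n \<ge> 1\<close>] by linarith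
qed

end
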